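(* Let $B$ be a unital $C^*$-algebra with a $*$-isomorphism $\psi:B\to M_n\otimes B$ satisfying $\psi(1)=I_n\otimes1$, let $A$ be a maximal abelian $*$-subalgebra of $B$, and let $\phi:A\to\mathbb{C}$ be a unital algebra homomorphism extended to a positive contraction $\phi:B\to\mathbb{C}$. If $\sigma_2(A)\subset A$, then $(\mathrm{id}\otimes e_{ij}\otimes\mathrm{id}^{\otimes(m-1)})(\phi_{m+1}(A))\subset\phi_m(A)$ for all $m\ge1$ and $1\le i,j\le n$.
   Context: $M_n=M_n(\mathbb{C})$, matrix units $E_{kl}$, identity $I_n$. Define $\psi_0=\mathrm{id}_B$, $\psi_{m+1}=(\mathrm{id}^{\otimes m}\otimes\psi)\circ\psi_m:B\to M_n^{\otimes(m+1)}\otimes B$. With $f(b)=I_n\otimes b$, $\sigma_2=\psi_2^{-1}\circ(\mathrm{id}\otimes f)\circ\psi_1:B\to B$. For $m\ge1$, $\phi_m=(\mathrm{id}^{\otimes m}\otimes\phi)\circ\psi_m:B\to M_n^{\otimes m}$. $e_{ij}:M_n\to\mathbb{C}$ is the linear functional $e_{ij}(E_{kl})=\delta_{ik}\delta_{jl}$, and $\mathrm{id}\otimes e_{ij}\otimes\mathrm{id}^{\otimes(m-1)}:M_n^{\otimes(m+1)}\to M_n^{\otimes m}$ applies $e_{ij}$ to the second tensor factor. *)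

theory Defs
  imports Complex_Main
begin

definition cstar_algebra ::
  "(complex \<Rightarrow> 'b::ring_1 \<Rightarrow> 'b) \<Rightarrow> ('b \<Rightarrow> 'b) \<Rightarrow> ('b \<Rightarrow> real) \<Rightarrow> bool" where
  "cstar_algebra sc st nr \<longleftrightarrow>
     (\<forall>a. sc 1 a = a) \<and> (\<forall>c d a. sc c (sc d a) = sc (c * d) a) \<and>
     (\<forall>c a b. sc c (a + b) = sc c a + sc c b) \<and> (\<forall>c d a. sc (c + d) a = sc c a + sc d a) \<and>
     (\<forall>c a b. sc c (a * b) = sc c a * b \<and> sc c (a * b) = a * sc c b) \<and>
     (\<forall>a. st (st a) = a) \<and> (\<forall>a b. st (a + b) = st a + st b) \<and>
     (\<forall>c a. st (sc c a) = sc (cnj c) (st a)) \<and> (\<forall>a b. st (a * b) = st b * st a) \<and>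
     (\<forall>a. 0 \<le> nr a) \<and> (\<forall>a. nr a = 0 \<longleftrightarrow> a = 0) \<and> (\<forall>a b. nr (a + b) \<le> nr a + nr b) \<and>
     (\<forall>c a. nr (sc c a) = cmod c * nr a) \<and> (\<forall>a b. nr (a * b) \<le> nr a * nr b) \<and>
     (\<forall>a. nr (st a * a) = (nr a)\<^sup>2) \<and>
     (\<forall>X :: nat \<Rightarrow> 'b. (\<forall>e>0. \<exists>N. \<forall>p\<ge>N. \<forall>q\<ge>N. nr (X p - X q) < e) \<longrightarrow>
          (\<exists>L. \<forall>e>0. \<exists>N. \<forall>p\<ge>N. nr (X p - L) < e))"

text \<open>M_n \<otimes> B is identified with n x n matrices over B, represented as
  functions nat \<Rightarrow> nat \<Rightarrow> 'b vanishing outside {0..<n} x {0..<n}.\<close>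

definition matB :: "nat \<Rightarrow> (nat \<Rightarrow> nat \<Rightarrow> 'b::zero) set" where
  "matB n = {X. \<forall>k l. \<not> (k < n \<and> l < n) \<longrightarrow> X k l = 0}"

definition mat_mult :: "nat \<Rightarrow> (nat \<Rightarrow> nat \<Rightarrow> 'b::semiring_0) \<Rightarrow> (nat \<Rightarrow> nat \<Rightarrow> 'b) \<Rightarrow> nat \<Rightarrow> nat \<Rightarrow> 'b" where
  "mat_mult n X Y = (\<lambda>k l. \<Sum>r<n. X k r * Y r l)"

definition star_iso :: "nat \<Rightarrow> (complex \<Rightarrow> 'b::ring_1 \<Rightarrow> 'b) \<Rightarrow> ('b \<Rightarrow> 'b) \<Rightarrow> ('b \<Rightarrow> nat \<Rightarrow> nat \<Rightarrow> 'b) \<Rightarrow> bool" where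
  "star_iso n sc st psi \<longleftrightarrow>
     bij_betw psi UNIV (matB n) \<and>
     (\<forall>a b. psi (a + b) = (\<lambda>k l. psi a k l + psi b k l)) \<and>
     (\<forall>c a. psi (sc c a) = (\<lambda>k l. sc c (psi a k l))) \<and>
     (\<forall>a b. psi (a * b) = mat_mult n (psi a) (psi b)) \<and>
     (\<forall>a. psi (st a) = (\<lambda>k l. st (psi a l k)))"

definition idmat :: "nat \<Rightarrow> nat \<Rightarrow> nat \<Rightarrow> 'b::{zero,one}" where
  "idmat n = (\<lambda>k l. if k = l \<and> k < n then 1 else 0)"

text \<open>M_n^{\<otimes>m} \<otimes> B is represented by functions on pairs of index lists
  (list position p = p-th tensor factor M_n); entries are nonzero only at lists of
  length m with entries < n.  psi_m defined by psi_0 = id, psi_{m+1} = (id^m \<otimes> psi) \<circ> psi_m.\<close>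
fun psi_pow :: "('b::zero \<Rightarrow> nat \<Rightarrow> nat \<Rightarrow> 'b) \<Rightarrow> nat \<Rightarrow> 'b \<Rightarrow> nat list \<Rightarrow> nat list \<Rightarrow> 'b" where
  "psi_pow psi 0 b = (\<lambda>ks ls. if ks = [] \<and> ls = [] then b else 0)"
| "psi_pow psi (Suc m) b = (\<lambda>ks ls.
     if length ks = Suc m \<and> length ls = Suc m
     then psi (psi_pow psi m b (butlast ks) (butlast ls)) (last ks) (last ls) else 0)"

text \<open>sigma_2 = psi_2^{-1} \<circ> (id \<otimes> f) \<circ> psi_1 with f(b) = I_n \<otimes> b.\<close>
definition sigma2 :: "nat \<Rightarrow> ('b::zero \<Rightarrow> nat \<Rightarrow> nat \<Rightarrow> 'b) \<Rightarrow> 'b \<Rightarrow> 'b" where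
  "sigma2 n psi b = (THE b'. psi_pow psi 2 b' =
     (\<lambda>ks ls. if length ks = 2 \<and> length ls = 2 \<and> ks ! 1 = ls ! 1 \<and> ks ! 1 < n
              then psi b (ks ! 0) (ls ! 0) else 0))"

definition phi_pow :: "('b::zero \<Rightarrow> nat \<Rightarrow> nat \<Rightarrow> 'b) \<Rightarrow> ('b \<Rightarrow> complex) \<Rightarrow> nat \<Rightarrow> 'b \<Rightarrow> nat list \<Rightarrow> nat list \<Rightarrow> complex" where
  "phi_pow psi phi m b = (\<lambda>ks ls. phi (psi_pow psi m b ks ls))"

text \<open>id \<otimes> e_ij \<otimes> id^{m-1}: apply e_ij to the second tensor factor (indices 0-based).\<close>
definition slot_e :: "nat \<Rightarrow> nat \<Rightarrow> (nat list \<Rightarrow> nat list \<Rightarrow> complex) \<Rightarrow> nat list \<Rightarrow> nat list \<Rightarrow> complex" where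
  "slot_e i j X = (\<lambda>ks ls. if ks \<noteq> [] \<and> ls \<noteq> [] then X (hd ks # i # tl ks) (hd ls # j # tl ls) else 0)"

definition star_subalgebra :: "(complex \<Rightarrow> 'b::ring_1 \<Rightarrow> 'b) \<Rightarrow> ('b \<Rightarrow> 'b) \<Rightarrow> 'b set \<Rightarrow> bool" where
  "star_subalgebra sc st A \<longleftrightarrow> 0 \<in> A \<and>
     (\<forall>a\<in>A. \<forall>b\<in>A. a + b \<in> A \<and> a * b \<in> A) \<and> (\<forall>c. \<forall>a\<in>A. sc c a \<in> A) \<and> (\<forall>a\<in>A. st a \<in> A)"

definition abelian_star_subalgebra :: "(complex \<Rightarrow> 'b::ring_1 \<Rightarrow> 'b) \<Rightarrow> ('b \<Rightarrow> 'b) \<Rightarrow> 'b set \<Rightarrow> bool" where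
  "abelian_star_subalgebra sc st A \<longleftrightarrow> star_subalgebra sc st A \<and> (\<forall>a\<in>A. \<forall>b\<in>A. a * b = b * a)"

definition max_abelian_star_subalgebra :: "(complex \<Rightarrow> 'b::ring_1 \<Rightarrow> 'b) \<Rightarrow> ('b \<Rightarrow> 'b) \<Rightarrow> 'b set \<Rightarrow> bool" where
  "max_abelian_star_subalgebra sc st A \<longleftrightarrow> abelian_star_subalgebra sc st A \<and>
     (\<forall>A'. abelian_star_subalgebra sc st A' \<and> A \<subseteq> A' \<longrightarrow> A' = A)"

definition positive_contraction :: "(complex \<Rightarrow> 'b::ring_1 \<Rightarrow> 'b) \<Rightarrow> ('b \<Rightarrow> 'b) \<Rightarrow> ('b \<Rightarrow> real) \<Rightarrow> ('b \<Rightarrow> complex) \<Rightarrow> bool" where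
  "positive_contraction sc st nr phi \<longleftrightarrow>
     (\<forall>a b. phi (a + b) = phi a + phi b) \<and> (\<forall>c a. phi (sc c a) = c * phi a) \<and>
     (\<forall>a. Im (phi (st a * a)) = 0 \<and> 0 \<le> Re (phi (st a * a))) \<and>
     (\<forall>a. cmod (phi a) \<le> nr a)"

end

theory Submission
  imports Defs
begin

text \<open>Applying e_ij to the second tensor factor of phi_{m+1}(a) gives phi_m(F_ij a), where
  F_ij a := psi^{-1}((psi(psi(a)_kl))_ij)_kl.  So it suffices that F_ij maps A into A.
  Since sigma_2(b) = psi^{-1}(I_n \<otimes> b_kl)_kl for psi(b) = (b_kl), the relation
  a sigma_2(b) = sigma_2(b) a, read off in the (i,j) entry after applying psi once more,
  says exactly that F_ij a commutes with b.  Hence F_ij a and (F_ij a)* = F_ji(a*) lie in the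
  commutant of A, and so do the real and imaginary parts of F_ij a; a self-adjoint element
  of the commutant generates, together with A, an abelian *-subalgebra, so by maximality
  it lies in A.\<close>

inductive_set star_generated :: "(complex \<Rightarrow> 'b::ring_1 \<Rightarrow> 'b) \<Rightarrow> ('b \<Rightarrow> 'b) \<Rightarrow> 'b set \<Rightarrow> 'b set"
  for sc st S where
  base: "x \<in> S \<Longrightarrow> x \<in> star_generated sc st S"
| zero: "0 \<in> star_generated sc st S"
| add: "x \<in> star_generated sc st S \<Longrightarrow> y \<in> star_generated sc st S \<Longrightarrow> x + y \<in> star_generated sc st S"
| mult: "x \<in> star_generated sc st S \<Longrightarrow> y \<in> star_generated sc st S \<Longrightarrow> x * y \<in> star_generated sc st S"
| scale: "x \<in> star_generated sc st S \<Longrightarrow> sc c x \<in> star_generated sc st S"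
| star: "x \<in> star_generated sc st S \<Longrightarrow> st x \<in> star_generated sc st S"

locale cstar =
  fixes sc :: "complex \<Rightarrow> 'b::ring_1 \<Rightarrow> 'b" and st :: "'b \<Rightarrow> 'b" and nr :: "'b \<Rightarrow> real"
  assumes cstar_algebra: "cstar_algebra sc st nr"
begin

lemma sc_one: "sc 1 a = a"
  and sc_add: "sc c (a + b) = sc c a + sc c b"
  and add_sc: "sc (c + d) a = sc c a + sc d a"
  and sc_sc: "sc c (sc d a) = sc (c * d) a"
  and sc_mult_left: "sc c (a * b) = sc c a * b"
  and sc_mult_right: "sc c (a * b) = a * sc c b"
  using cstar_algebra unfolding cstar_algebra_def by metis+

lemma st_st: "st (st a) = a"
  and st_add: "st (a + b) = st a + st b"
  and st_sc: "st (sc c a) = sc (cnj c) (st a)"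
  and st_mult: "st (a * b) = st b * st a"
  using cstar_algebra unfolding cstar_algebra_def by auto

lemma sc_zero: "sc 0 a = 0"
  using add_sc[of 0 0 a] by simp

lemma commute_add: "(x::'b) * b = b * x \<Longrightarrow> y * b = b * y \<Longrightarrow> (x + y) * b = b * (x + y)"
  by (simp add: distrib_left distrib_right)

lemma commute_mult:
  assumes "(x::'b) * b = b * x" "y * b = b * y"
  shows "(x * y) * b = b * (x * y)"
proof -
  have "(x * y) * b = x * (b * y)"
    by (simp add: mult.assoc assms(2))
  also have "\<dots> = b * (x * y)"
    by (simp flip: mult.assoc add: assms(1))
  finally show ?thesis .
qed

lemma commute_sc: "x * b = b * x \<Longrightarrow> sc c x * b = b * sc c x"
  by (simp flip: sc_mult_left sc_mult_right)

lemma commute_st: "x * b = b * x \<Longrightarrow> st x * st b = st b * st x"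
  by (simp flip: st_mult)

lemma star_generated_commute:
  assumes "g \<in> star_generated sc st S"
    and "\<forall>s\<in>S. s * y = y * s \<and> s * st y = st y * s"
  shows "g * y = y * g \<and> g * st y = st y * g"
  using assms
proof (induction rule: star_generated.induct)
  case (star x)
  then show ?case
    using commute_st[of x y] commute_st[of x "st y"] by (simp add: st_st)
qed (auto intro: commute_add commute_mult commute_sc)

lemma abelian_star_generated:
  assumes st_closed: "\<forall>s\<in>S. st s \<in> S" and comm: "\<forall>s\<in>S. \<forall>t\<in>S. s * t = t * s"
  shows "abelian_star_subalgebra sc st (star_generated sc st S)"
proof -
  let ?G = "star_generated sc st S"
  have gen_comm_base: "g * s = s * g" if "g \<in> ?G" "s \<in> S" for g s
    using star_generated_commute[OF \<open>g \<in> ?G\<close>, of s] st_closed comm \<open>s \<in> S\<close> by simp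
  have "g * h = h * g" if "g \<in> ?G" "h \<in> ?G" for g h
    using star_generated_commute[OF \<open>g \<in> ?G\<close>, of h] gen_comm_base
      star_generated.star[OF \<open>h \<in> ?G\<close>] \<open>h \<in> ?G\<close> by simp
  then show ?thesis
    unfolding abelian_star_subalgebra_def star_subalgebra_def
    by (auto intro: star_generated.intros)
qed

lemma max_abelian_selfadjoint_mem:
  assumes A: "max_abelian_star_subalgebra sc st A"
    and self_adjoint: "st h = h" and comm: "\<forall>b\<in>A. h * b = b * h"
  shows "h \<in> A"
proof -
  let ?G = "star_generated sc st (insert h A)"
  have A_comm: "\<And>a b. a \<in> A \<Longrightarrow> b \<in> A \<Longrightarrow> a * b = b * a"
    and A_st: "\<And>a. a \<in> A \<Longrightarrow> st a \<in> A"
    using A unfolding max_abelian_star_subalgebra_def abelian_star_subalgebra_def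
      star_subalgebra_def by blast+
  have "abelian_star_subalgebra sc st ?G"
  proof (rule abelian_star_generated)
    show "\<forall>s\<in>insert h A. st s \<in> insert h A"
      using self_adjoint A_st by blast
    show "\<forall>s\<in>insert h A. \<forall>t\<in>insert h A. s * t = t * s"
      using comm A_comm by (metis insert_iff)
  qed
  moreover have "A \<subseteq> ?G"
    by (auto intro: star_generated.base)
  ultimately have "?G = A"
    using A unfolding max_abelian_star_subalgebra_def by blast
  then show ?thesis
    using star_generated.base[of h "insert h A"] by blast
qed

lemma max_abelian_commutant_mem:
  assumes A: "max_abelian_star_subalgebra sc st A"
    and comm: "\<forall>b\<in>A. x * b = b * x" and comm_st: "\<forall>b\<in>A. st x * b = b * st x"
  shows "x \<in> A"
proof -
  have A_closed: "\<And>a b. a \<in> A \<Longrightarrow> b \<in> A \<Longrightarrow> a + b \<in> A" "\<And>c a. a \<in> A \<Longrightarrow> sc c a \<in> A"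
    using A unfolding max_abelian_star_subalgebra_def abelian_star_subalgebra_def
      star_subalgebra_def by blast+
  define re where "re = x + st x"
  define im where "im = sc \<i> x + sc (- \<i>) (st x)"
  have "st re = re"
    unfolding re_def by (simp add: st_add st_st add.commute)
  moreover have "\<forall>b\<in>A. re * b = b * re"
    unfolding re_def using comm comm_st by (blast intro: commute_add)
  ultimately have re_mem: "re \<in> A"
    by (rule max_abelian_selfadjoint_mem[OF A])
  have "st im = im"
    unfolding im_def by (simp add: st_add st_sc st_st add.commute)
  moreover have "\<forall>b\<in>A. im * b = b * im"
    unfolding im_def using comm comm_st by (blast intro: commute_add commute_sc)
  ultimately have im_mem: "im \<in> A"
    by (rule max_abelian_selfadjoint_mem[OF A])
  have "x = sc (1/2) re + sc (- \<i>/2) im"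
  proof -
    have "sc (1/2) re + sc (- \<i>/2) im
        = (sc (1/2) x + sc (1/2) (st x)) + (sc (1/2) x + sc (-1/2) (st x))"
      unfolding re_def im_def by (simp add: sc_add sc_sc)
    also have "\<dots> = sc (1/2 + 1/2) x + sc (1/2 + -1/2) (st x)"
      by (simp only: add_sc add.assoc add.left_commute)
    also have "\<dots> = x"
      by (simp add: sc_one sc_zero)
    finally show ?thesis ..
  qed
  then show ?thesis
    using A_closed re_mem im_mem by simp
qed

end

lemma psi_pow_Cons: "psi_pow psi (Suc m) a (k # ks) (l # ls) = psi_pow psi m (psi a k l) ks ls"
proof (induction m arbitrary: ks ls)
  case (Suc m)
  show ?case
  proof (cases "length ks = Suc m \<and> length ls = Suc m")
    case True
    then have "ks \<noteq> []" "ls \<noteq> []" by auto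
    have "psi_pow psi (Suc (Suc m)) a (k # ks) (l # ls)
        = psi (psi_pow psi (Suc m) a (k # butlast ks) (l # butlast ls)) (last ks) (last ls)"
      using True \<open>ks \<noteq> []\<close> \<open>ls \<noteq> []\<close>
      by (subst psi_pow.simps(2)) (simp del: psi_pow.simps)
    also have "\<dots> = psi (psi_pow psi m (psi a k l) (butlast ks) (butlast ls)) (last ks) (last ls)"
      by (simp only: Suc.IH)
    also have "\<dots> = psi_pow psi (Suc m) (psi a k l) ks ls"
      using True by (subst psi_pow.simps(2)) (simp del: psi_pow.simps)
    finally show ?thesis .
  qed auto
qed auto

lemma psi_pow_two:
  "psi_pow psi 2 a ks ls =
     (if length ks = 2 \<and> length ls = 2 then psi (psi a (ks ! 0) (ls ! 0)) (ks ! 1) (ls ! 1) else 0)"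
proof (cases "length ks = 2 \<and> length ls = 2")
  case True
  then obtain k0 k1 l0 l1 where "ks = [k0, k1]" "ls = [l0, l1]"
    by (metis (no_types) One_nat_def Suc_length_conv length_0_conv numeral_2_eq_2)
  then show ?thesis by (simp add: numeral_2_eq_2)
qed (auto simp: numeral_2_eq_2)

locale matrix_iso = cstar +
  fixes n :: nat and psi :: "'b::ring_1 \<Rightarrow> nat \<Rightarrow> nat \<Rightarrow> 'b"
  assumes star_iso: "star_iso n sc st psi"
begin

lemma psi_add: "psi (a + b) = (\<lambda>k l. psi a k l + psi b k l)"
  and psi_mult: "psi (a * b) = mat_mult n (psi a) (psi b)"
  and psi_st: "psi (st a) = (\<lambda>k l. st (psi a l k))"
  and psi_bij: "bij_betw psi UNIV (matB n)"
  using star_iso unfolding star_iso_def by blast+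

lemma psi_eq_iff: "psi a = psi b \<longleftrightarrow> a = b"
  using psi_bij by (auto simp: bij_betw_def inj_eq)

lemma psi_inv: "X \<in> matB n \<Longrightarrow> psi (inv psi X) = X"
  using psi_bij by (metis bij_betw_imp_surj_on f_inv_into_f)

lemma psi_eqI: "(\<And>k l. psi a k l = psi b k l) \<Longrightarrow> a = b"
  using psi_eq_iff by blast

lemma psi_zero: "psi 0 k l = 0"
  using fun_cong[OF fun_cong[OF psi_add[of 0 0]], of k l] by simp

lemma psi_outside: "\<not> (k < n \<and> l < n) \<Longrightarrow> psi a k l = 0"
  using bij_betwE[OF psi_bij] unfolding matB_def by blast

lemma psi_sum: "finite S \<Longrightarrow> psi (\<Sum>r\<in>S. f r) k l = (\<Sum>r\<in>S. psi (f r) k l)"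
  by (induction S rule: finite_induct) (auto simp: psi_zero psi_add)

definition diag_mat :: "'b \<Rightarrow> nat \<Rightarrow> nat \<Rightarrow> 'b" where
  "diag_mat c = (\<lambda>k l. if k = l \<and> k < n then c else 0)"

definition ampliation :: "'b \<Rightarrow> 'b" where
  "ampliation c = inv psi (diag_mat c)"

lemma psi_ampliation: "psi (ampliation c) = diag_mat c"
  unfolding ampliation_def by (rule psi_inv) (simp add: matB_def diag_mat_def)

lemma ampliation_zero: "ampliation 0 = 0"
  by (rule psi_eqI) (simp add: psi_ampliation diag_mat_def psi_zero)

lemma sum_diag_mat_right: "j < n \<Longrightarrow> (\<Sum>s<n. f s * diag_mat c s j) = f j * c"
  unfolding diag_mat_def by (simp add: if_distrib[of "(*) _"] cong: if_cong)

lemma sum_diag_mat_left: "i < n \<Longrightarrow> (\<Sum>s<n. diag_mat c i s * f s) = c * f i"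
  unfolding diag_mat_def by (simp add: if_distrib[of "\<lambda>x. x * _"] cong: if_cong)

lemma sigma2_eq: "sigma2 n psi b = inv psi (\<lambda>k l. ampliation (psi b k l))"
proof -
  let ?b = "inv psi (\<lambda>k l. ampliation (psi b k l))"
  have psi_b: "psi ?b = (\<lambda>k l. ampliation (psi b k l))"
    by (rule psi_inv) (simp add: matB_def psi_outside ampliation_zero)
  let ?rhs = "\<lambda>ks ls. if length ks = 2 \<and> length ls = 2 \<and> ks ! 1 = ls ! 1 \<and> ks ! 1 < n
                       then psi b (ks ! 0) (ls ! 0) else 0"
  have solves: "psi_pow psi 2 ?b = ?rhs"
    by (intro ext) (simp add: psi_pow_two psi_b psi_ampliation diag_mat_def)
  have unique: "y = ?b" if "psi_pow psi 2 y = ?rhs" for y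
  proof (rule psi_eqI)
    fix k0 l0
    have "psi (psi y k0 l0) k1 l1 = psi (psi ?b k0 l0) k1 l1" for k1 l1
      using fun_cong[OF fun_cong[OF that[folded solves]], of "[k0, k1]" "[l0, l1]"]
      by (simp add: psi_pow_two)
    then show "psi y k0 l0 = psi ?b k0 l0"
      by (rule psi_eqI)
  qed
  show ?thesis
    unfolding sigma2_def using solves unique by (rule the_equality)
qed

lemma psi_sigma2: "psi (sigma2 n psi b) k l = ampliation (psi b k l)"
  unfolding sigma2_eq
  by (subst psi_inv) (auto simp: matB_def psi_outside ampliation_zero)

text \<open>slice i j is the map F_ij = psi^{-1} \<circ> (id \<otimes> e_ij) \<circ> psi_2 of the proof idea.\<close>

definition slice :: "nat \<Rightarrow> nat \<Rightarrow> 'b \<Rightarrow> 'b" where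
  "slice i j a = inv psi (\<lambda>k l. psi (psi a k l) i j)"

lemma psi_slice: "psi (slice i j a) k l = psi (psi a k l) i j"
  unfolding slice_def
  by (subst psi_inv) (auto simp: matB_def psi_outside psi_zero)

lemma st_slice: "st (slice i j a) = slice j i (st a)"
  by (rule psi_eqI) (simp add: psi_st psi_slice)

lemma slice_commute:
  assumes comm: "a * sigma2 n psi b = sigma2 n psi b * a" and "i < n" "j < n"
  shows "slice i j a * b = b * slice i j a"
proof (rule psi_eqI)
  fix k l
  have "(\<Sum>r<n. psi a k r * ampliation (psi b r l)) = (\<Sum>r<n. ampliation (psi b k r) * psi a r l)"
    using fun_cong[OF fun_cong[OF arg_cong[OF comm, of psi]], of k l]
    by (simp add: psi_mult mat_mult_def psi_sigma2)
  then have "(\<Sum>r<n. psi (psi a k r * ampliation (psi b r l)) i j)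
           = (\<Sum>r<n. psi (ampliation (psi b k r) * psi a r l) i j)"
    by (simp flip: psi_sum)
  then show "psi (slice i j a * b) k l = psi (b * slice i j a) k l"
    using assms(2,3)
    by (simp add: psi_mult mat_mult_def psi_slice psi_ampliation sum_diag_mat_right sum_diag_mat_left)
qed

lemma slice_mem:
  assumes A: "max_abelian_star_subalgebra sc st A" and sigma2_A: "sigma2 n psi ` A \<subseteq> A"
    and "a \<in> A" "i < n" "j < n"
  shows "slice i j a \<in> A"
proof -
  have A_abelian: "\<forall>x\<in>A. \<forall>y\<in>A. x * y = y * x" and A_st: "\<forall>x\<in>A. st x \<in> A"
    using A unfolding max_abelian_star_subalgebra_def abelian_star_subalgebra_def
      star_subalgebra_def by blast+
  have commutant: "slice i' j' x * b = b * slice i' j' x"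
    if "x \<in> A" "b \<in> A" "i' < n" "j' < n" for i' j' x b
    using that sigma2_A A_abelian by (intro slice_commute) blast+
  show ?thesis
    using assms(3-5) A_st
    by (intro max_abelian_commutant_mem[OF A]) (auto simp: st_slice intro: commutant)
qed

lemma slot_e_phi_pow_Suc:
  assumes "phi 0 = 0" and "m \<ge> 1"
  shows "slot_e i j (phi_pow psi phi (Suc m) a) = phi_pow psi phi m (slice i j a)"
proof (intro ext)
  fix ks ls
  obtain m' where m: "m = Suc m'" using \<open>m \<ge> 1\<close> by (cases m) auto
  show "slot_e i j (phi_pow psi phi (Suc m) a) ks ls = phi_pow psi phi m (slice i j a) ks ls"
  proof (cases ks; cases ls)
    fix k ks' l ls'
    assume "ks = k # ks'" "ls = l # ls'"
    then show ?thesis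
      unfolding slot_e_def phi_pow_def m by (simp only: psi_pow_Cons psi_slice list.sel) simp
  qed (auto simp: slot_e_def phi_pow_def m \<open>phi 0 = 0\<close>)
qed

end

theorem proposition3p7:
  fixes sc :: "complex \<Rightarrow> 'b::ring_1 \<Rightarrow> 'b" and st :: "'b \<Rightarrow> 'b" and nr :: "'b \<Rightarrow> real"
    and n :: nat and psi :: "'b \<Rightarrow> nat \<Rightarrow> nat \<Rightarrow> 'b" and A :: "'b set" and phi :: "'b \<Rightarrow> complex"
  assumes "cstar_algebra sc st nr"
    and "n \<ge> 1"
    and "star_iso n sc st psi"
    and "psi 1 = idmat n"
    and "max_abelian_star_subalgebra sc st A"
    and "positive_contraction sc st nr phi"
    and "phi 1 = 1"
    and "\<forall>a\<in>A. \<forall>b\<in>A. phi (a * b) = phi a * phi b"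
    and "sigma2 n psi ` A \<subseteq> A"
  shows "\<forall>m\<ge>1. \<forall>i<n. \<forall>j<n. slot_e i j ` (phi_pow psi phi (Suc m) ` A) \<subseteq> phi_pow psi phi m ` A"
proof (intro allI impI subsetI)
  interpret matrix_iso sc st nr n psi
    using assms(1,3) by unfold_locales
  have "phi (0 + 0) = phi 0 + phi 0"
    using assms(6) unfolding positive_contraction_def by blast
  then have phi_zero: "phi 0 = 0"
    by simp
  fix m i j X
  assume "m \<ge> 1" "i < n" "j < n" and "X \<in> slot_e i j ` phi_pow psi phi (Suc m) ` A"
  then obtain a where "a \<in> A" and "X = phi_pow psi phi m (slice i j a)"
    using slot_e_phi_pow_Suc[of phi, OF phi_zero] by auto
  then show "X \<in> phi_pow psi phi m ` A"
    using slice_mem[OF assms(5,9)] \<open>i < n\<close> \<open>j < n\<close> by blast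
qed

end
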